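(* Let $(G,\sigma)$ be a connection graph and $i,j\in V$ with $i\neq j$. Write $j^c=V\setminus\{j\}$ and partition the connection Laplacian as $\mathcal{L}=\begin{bmatrix}\mathcal{L}_{j}&\mathcal{L}_{j,j^c}\\ \mathcal{L}_{j^c,j}&\mathcal{L}_{j^c}\end{bmatrix}$ (reordering nodes so that $j$ comes first). Then $$\Omega^0_{ij}=-\big((\mathcal{L}_{j^c})^{-1}\mathcal{L}_{j^c,j}\big)(i),$$ where $(\cdot)(i)$ denotes the $d\times d$ block corresponding to node $i$.
   Context: A connection graph $(G,\sigma)$: finite connected weighted graph $G=(V,E,W)$, $V=\{1,\dots,n\}$, with $w_{ij}>0$ iff $\{i,j\}\in E$, $\deg(i)=\sum_j w_{ij}$, and $\sigma$ mapping oriented edges to $\mathsf{O}(d)$ with $\sigma_{ji}=\sigma_{ij}^{\mathrm T}$. The connection Laplacian $\mathcal{L}$ is the $nd\times nd$ block matrix with $d\times d$ blocks $\deg(i)I_d$ on the diagonal, $-w_{ij}\sigma_{ij}$ for $i\sim j$, $0$ otherwise. Simple random walk $(X_t)$ with transition probabilities $w_{ij}/\deg(i)$; $T^0_j=\inf\{t\ge0:X_t=j\}$; $\Omega^0_{ij}=\mathbb{E}\big[\prod_{\ell=1}^{T^0_j}\sigma_{X_{\ell-1}X_\ell}\mid X_0=i\big]$ (ordered product). *)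

theory Defs
  imports "HOL-Analysis.Infinite_Sum" "Jordan_Normal_Form.Matrix"
begin

text \<open>Vertices are 0..<n (the paper's 1..n shifted by one). w i k is the weight,
  sig i k the connection matrix (a d x d real matrix) on the oriented edge (i,k).\<close>

definition vdeg :: "nat \<Rightarrow> (nat \<Rightarrow> nat \<Rightarrow> real) \<Rightarrow> nat \<Rightarrow> real" where
  "vdeg n w i = (\<Sum>k<n. w i k)"

definition connection_graph ::
  "nat \<Rightarrow> nat \<Rightarrow> (nat \<Rightarrow> nat \<Rightarrow> real) \<Rightarrow> (nat \<Rightarrow> nat \<Rightarrow> real mat) \<Rightarrow> bool" where
  "connection_graph n d w sig \<longleftrightarrow>
     (\<forall>i<n. \<forall>k<n. w i k \<ge> 0 \<and> w i k = w k i) \<and>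
     (\<forall>i<n. w i i = 0) \<and>
     (\<forall>i<n. \<forall>k<n. 0 < w i k \<longrightarrow>
        sig i k \<in> carrier_mat d d \<and> sig i k * transpose_mat (sig i k) = 1\<^sub>m d \<and>
        sig k i = transpose_mat (sig i k)) \<and>
     (\<forall>i<n. \<forall>k<n. (i, k) \<in> {(a, b). a < n \<and> b < n \<and> 0 < w a b}\<^sup>*)"

text \<open>Connection Laplacian: index r of the nd x nd matrix corresponds to node r div d,
  component r mod d.\<close>
definition conn_laplacian ::
  "nat \<Rightarrow> nat \<Rightarrow> (nat \<Rightarrow> nat \<Rightarrow> real) \<Rightarrow> (nat \<Rightarrow> nat \<Rightarrow> real mat) \<Rightarrow> real mat" where
  "conn_laplacian n d w sig = mat (n * d) (n * d) (\<lambda>(r, c).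
     (let i = r div d; a = r mod d; k = c div d; b = c mod d in
      if i = k then (if a = b then vdeg n w i else 0)
      else if 0 < w i k then - (w i k * (sig i k $$ (a, b))) else 0))"

text \<open>Nodes of j^c = V - {j}, enumerated in increasing order: position p is node
  skip j p; node i (i \<noteq> j) has position pos j i.\<close>
definition skip :: "nat \<Rightarrow> nat \<Rightarrow> nat" where
  "skip j p = (if p < j then p else p + 1)"

definition pos :: "nat \<Rightarrow> nat \<Rightarrow> nat" where
  "pos j i = (if i < j then i else i - 1)"

definition lap_jc :: "nat \<Rightarrow> nat \<Rightarrow> nat \<Rightarrow> real mat \<Rightarrow> real mat" where
  "lap_jc n d j L = mat ((n - 1) * d) ((n - 1) * d) (\<lambda>(r, c).
      L $$ (skip j (r div d) * d + r mod d, skip j (c div d) * d + c mod d))"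

definition lap_jc_j :: "nat \<Rightarrow> nat \<Rightarrow> nat \<Rightarrow> real mat \<Rightarrow> real mat" where
  "lap_jc_j n d j L = mat ((n - 1) * d) d (\<lambda>(r, b).
      L $$ (skip j (r div d) * d + r mod d, j * d + b))"

definition node_block :: "nat \<Rightarrow> nat \<Rightarrow> nat \<Rightarrow> real mat \<Rightarrow> real mat" where
  "node_block d j i M = mat d d (\<lambda>(a, b). M $$ (pos j i * d + a, b))"

text \<open>Random walk paths: a walk starting at x is determined by the list of subsequent
  vertices [X_1, ..., X_T]. Its probability and ordered product of connection matrices:\<close>
fun walk_prob :: "nat \<Rightarrow> (nat \<Rightarrow> nat \<Rightarrow> real) \<Rightarrow> nat \<Rightarrow> nat list \<Rightarrow> real" where
  "walk_prob n w x [] = 1"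
| "walk_prob n w x (y # ys) = w x y / vdeg n w x * walk_prob n w y ys"

fun walk_sig :: "nat \<Rightarrow> (nat \<Rightarrow> nat \<Rightarrow> real mat) \<Rightarrow> nat \<Rightarrow> nat list \<Rightarrow> real mat" where
  "walk_sig d sig x [] = 1\<^sub>m d"
| "walk_sig d sig x (y # ys) = sig x y * walk_sig d sig y ys"

text \<open>Possible trajectories (X_1..X_T) up to the hitting time T = T^0_j \<ge> 1 (start i \<noteq> j):
  vertices in V, last one j, no earlier visit to j.\<close>
definition first_passage_paths :: "nat \<Rightarrow> nat \<Rightarrow> nat list set" where
  "first_passage_paths n j =
     {ys. ys \<noteq> [] \<and> set ys \<subseteq> {..<n} \<and> last ys = j \<and> j \<notin> set (butlast ys)}"

text \<open>Omega^0_{ij} = E[ordered product of sigma along the walk up to T^0_j | X_0 = i],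
  the expectation written (entrywise) as a sum over the discrete trajectories.\<close>
definition Omega0 ::
  "nat \<Rightarrow> nat \<Rightarrow> (nat \<Rightarrow> nat \<Rightarrow> real) \<Rightarrow> (nat \<Rightarrow> nat \<Rightarrow> real mat) \<Rightarrow> nat \<Rightarrow> nat \<Rightarrow> real mat" where
  "Omega0 n d w sig i j = mat d d (\<lambda>(a, b).
     \<Sum>\<^sub>\<infinity>ys\<in>first_passage_paths n j. walk_prob n w i ys * (walk_sig d sig i ys $$ (a, b)))"

end

(* Splitting a first-passage path at its first step gives, for every k \<noteq> j,
     deg k * Omega_kj - \<Sum>_{l \<noteq> j} w_kl sig_kl Omega_lj = w_kj sig_kj,
   i.e. L_{j^c} Omega = - L_{j^c,j} for the column Omega of the blocks Omega_kj, k \<noteq> j.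
   The series defining Omega_kj converge absolutely: products of orthogonal matrices have
   entries of modulus at most 1, and the path probabilities sum to at most 1.
   L_{j^c} is invertible: if L_{j^c} u = 0, extend u by u_j = 0; then
     0 = 2 u^T L u = \<Sum>_{k,l} w_kl |u_k - sig_kl u_l|^2,
   so |u_k| = |u_l| along every edge, and connectivity forces |u_k| = |u_j| = 0. *)

theory Submission
  imports Defs "Jordan_Normal_Form.Determinant"
begin

lemma invertible_mat_if_trivial_kernel:
  fixes A :: "'a::field mat"
  assumes A: "A \<in> carrier_mat m m"
    and kernel: "\<And>v. v \<in> carrier_vec m \<Longrightarrow> A *\<^sub>v v = 0\<^sub>v m \<Longrightarrow> v = 0\<^sub>v m"
  shows "invertible_mat A"
proof -
  have "det A \<noteq> 0"
    using det_0_iff_vec_prod_zero_field[OF A] kernel by auto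
  then have "A \<in> Units (ring_mat TYPE('a) m ())"
    by (rule det_non_zero_imp_unit[OF A])
  then obtain B where "B \<in> carrier_mat m m" "B * A = 1\<^sub>m m" "A * B = 1\<^sub>m m"
    unfolding Units_def ring_mat_def by auto
  with A show ?thesis
    unfolding invertible_mat_def inverts_mat_def by auto
qed

lemma orthogonal_mat_mult:
  fixes P Q :: "'a::comm_ring_1 mat"
  assumes P: "P \<in> carrier_mat d d" and Q: "Q \<in> carrier_mat d d"
    and "P * transpose_mat P = 1\<^sub>m d" and "Q * transpose_mat Q = 1\<^sub>m d"
  shows "(P * Q) * transpose_mat (P * Q) = 1\<^sub>m d"
proof -
  have "(P * Q) * transpose_mat (P * Q) = P * (Q * transpose_mat Q) * transpose_mat P"
    using P Q by (simp add: transpose_mult assoc_mult_mat[of _ d d _ d _ d])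
  also have "\<dots> = 1\<^sub>m d"
    using assms by simp
  finally show ?thesis .
qed

lemma orthogonal_mat_entry_abs_le_1:
  fixes M :: "real mat"
  assumes M: "M \<in> carrier_mat d d" and orth: "M * transpose_mat M = 1\<^sub>m d"
    and "a < d" "b < d"
  shows "\<bar>M $$ (a, b)\<bar> \<le> 1"
proof -
  have "(M $$ (a, b))\<^sup>2 \<le> (\<Sum>c<d. (M $$ (a, c))\<^sup>2)"
    using \<open>b < d\<close> by (intro member_le_sum) auto
  also have "\<dots> = (M * transpose_mat M) $$ (a, a)"
    using M \<open>a < d\<close> by (simp add: scalar_prod_def atLeast0LessThan power2_eq_square)
  also have "\<dots> = 1"
    using orth \<open>a < d\<close> by simp
  finally show ?thesis
    by (simp add: abs_square_le_1)
qed

lemma orthogonal_mat_sum_squares: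
  fixes Q :: "real mat"
  assumes Q: "Q \<in> carrier_mat d d" and orth: "transpose_mat Q * Q = 1\<^sub>m d"
  shows "(\<Sum>a<d. (\<Sum>e<d. Q $$ (a, e) * g e)\<^sup>2) = (\<Sum>e<d. (g e)\<^sup>2)"
proof -
  define v where "v = vec d g"
  have v: "v \<in> carrier_vec d"
    by (simp add: v_def)
  have "(Q *\<^sub>v v) \<bullet> (Q *\<^sub>v v) = (transpose_mat Q *\<^sub>v (Q *\<^sub>v v)) \<bullet> v"
    using transpose_vec_mult_scalar[OF Q v, of "Q *\<^sub>v v"] Q v by simp
  also have "\<dots> = v \<bullet> v"
    using Q v orth by (simp flip: assoc_mult_mat_vec)
  finally show ?thesis
    using Q by (simp add: v_def scalar_prod_def atLeast0LessThan power2_eq_square)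
qed

lemma sum_blocks:
  fixes f :: "nat \<Rightarrow> 'a::comm_monoid_add"
  shows "(\<Sum>c<m * d. f c) = (\<Sum>l<m. \<Sum>e<d. f (l * d + e))"
proof -
  have "(\<Sum>e<d. f (l * d + e)) = sum f {l * d..<l * d + d}" for l
    using sum.shift_bounds_nat_ivl[of f 0 "l * d" d] by (simp add: add.commute atLeast0LessThan)
  then show ?thesis
    by (simp add: sum.nat_group)
qed

lemma has_sum_sum:
  fixes f :: "'i \<Rightarrow> 'a \<Rightarrow> 'b::topological_comm_monoid_add"
  assumes "finite I" and "\<And>c. c \<in> I \<Longrightarrow> (f c has_sum s c) A"
  shows "((\<lambda>x. \<Sum>c\<in>I. f c x) has_sum (\<Sum>c\<in>I. s c)) A"
  using assms by (induction I rule: finite_induct) (auto intro: has_sum_add)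

lemma block_index_lt:
  fixes k m a d :: nat
  assumes "k < m" and "a < d"
  shows "k * d + a < m * d"
proof -
  have "k * d + a < Suc k * d"
    using assms(2) by simp
  also have "\<dots> \<le> m * d"
    using assms(1) by (intro mult_le_mono1) simp
  finally show ?thesis .
qed

lemma skip_lt: "j < n \<Longrightarrow> p < n - 1 \<Longrightarrow> skip j p < n"
  by (auto simp: skip_def)

lemma skip_neq: "skip j p \<noteq> j"
  by (auto simp: skip_def)

lemma pos_skip [simp]: "pos j (skip j p) = p"
  by (auto simp: skip_def pos_def)

lemma skip_pos [simp]: "l \<noteq> j \<Longrightarrow> skip j (pos j l) = l"
  by (auto simp: skip_def pos_def)

lemma pos_lt: "j < n \<Longrightarrow> l < n \<Longrightarrow> l \<noteq> j \<Longrightarrow> pos j l < n - 1"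
  by (auto simp: pos_def)

lemma sum_skip: "j < n \<Longrightarrow> (\<Sum>p<n - 1. g (skip j p)) = (\<Sum>l\<in>{..<n} - {j}. g l)"
  by (rule sum.reindex_bij_witness[where i = "pos j" and j = "skip j"])
     (auto simp: pos_def skip_def)

lemma node_index_cases:
  assumes "r < (n - 1) * d" and "j < n"
  obtains k a where "k < n" "k \<noteq> j" "a < d" "r = pos j k * d + a"
proof
  have d: "0 < d"
    using assms(1) by (cases d) auto
  show "skip j (r div d) < n"
    using assms by (intro skip_lt) (simp_all add: div_less_iff_less_mult d)
  show "skip j (r div d) \<noteq> j"
    by (rule skip_neq)
  show "r mod d < d"
    using d by simp
  show "r = pos j (skip j (r div d)) * d + r mod d"
    by simp
qed

lemma lap_jc_index:
  assumes "j < n" "k < n" "k \<noteq> j" "l < n" "l \<noteq> j" "a < d" "e < d"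
  shows "lap_jc n d j L $$ (pos j k * d + a, pos j l * d + e) = L $$ (k * d + a, l * d + e)"
  using assms block_index_lt[OF pos_lt] by (simp add: lap_jc_def)

lemma lap_jc_carrier: "lap_jc n d j L \<in> carrier_mat ((n - 1) * d) ((n - 1) * d)"
  by (simp add: lap_jc_def)

lemma dim_lap_jc_j [simp]:
  "dim_row (lap_jc_j n d j L) = (n - 1) * d" "dim_col (lap_jc_j n d j L) = d"
  by (simp_all add: lap_jc_j_def)

lemma lap_jc_j_index:
  assumes "j < n" "k < n" "k \<noteq> j" "a < d" "b < d"
  shows "lap_jc_j n d j L $$ (pos j k * d + a, b) = L $$ (k * d + a, j * d + b)"
  using assms block_index_lt[OF pos_lt] by (simp add: lap_jc_j_def)

lemma first_passage_paths_Cons_iff: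
  assumes "j < n"
  shows "y # ys \<in> first_passage_paths n j \<longleftrightarrow>
    (y = j \<and> ys = []) \<or> (y < n \<and> y \<noteq> j \<and> ys \<in> first_passage_paths n j)"
  using assms by (cases ys) (auto simp: first_passage_paths_def)

lemma first_passage_paths_unfold:
  assumes "j < n"
  shows "first_passage_paths n j = insert [j] (\<Union>y\<in>{..<n} - {j}. (#) y ` first_passage_paths n j)"
proof (intro equalityI subsetI)
  fix ys assume ys: "ys \<in> first_passage_paths n j"
  then obtain y ys' where "ys = y # ys'"
    by (auto simp: first_passage_paths_def neq_Nil_conv)
  with ys show "ys \<in> insert [j] (\<Union>y\<in>{..<n} - {j}. (#) y ` first_passage_paths n j)"
    using first_passage_paths_Cons_iff[OF assms] by auto
qed (auto simp: first_passage_paths_Cons_iff[OF assms])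

lemma first_passage_paths_length_le_Suc:
  assumes "j < n"
  shows "{ys \<in> first_passage_paths n j. length ys \<le> Suc T} =
    insert [j] (\<Union>y\<in>{..<n} - {j}. (#) y ` {ys \<in> first_passage_paths n j. length ys \<le> T})"
  by (subst first_passage_paths_unfold[OF assms]) auto

lemma finite_first_passage_paths_length_le:
  "finite {ys \<in> first_passage_paths n j. length ys \<le> T}"
proof (rule finite_subset)
  show "{ys \<in> first_passage_paths n j. length ys \<le> T} \<subseteq> {ys. set ys \<subseteq> {..<n} \<and> length ys \<le> T}"
    by (auto simp: first_passage_paths_def)
qed (rule finite_lists_length_le[OF finite_lessThan])

locale conn_graph =
  fixes n d :: nat and w :: "nat \<Rightarrow> nat \<Rightarrow> real" and sig :: "nat \<Rightarrow> nat \<Rightarrow> real mat"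
  assumes graph: "connection_graph n d w sig"
begin

lemma weight_nonneg: "k < n \<Longrightarrow> l < n \<Longrightarrow> 0 \<le> w k l"
  using graph unfolding connection_graph_def by blast

lemma weight_sym: "k < n \<Longrightarrow> l < n \<Longrightarrow> w k l = w l k"
  using graph unfolding connection_graph_def by blast

lemma weight_self: "k < n \<Longrightarrow> w k k = 0"
  using graph unfolding connection_graph_def by blast

lemma sig_carrier: "k < n \<Longrightarrow> l < n \<Longrightarrow> 0 < w k l \<Longrightarrow> sig k l \<in> carrier_mat d d"
  using graph unfolding connection_graph_def by blast

lemma sig_orthogonal: "k < n \<Longrightarrow> l < n \<Longrightarrow> 0 < w k l \<Longrightarrow> sig k l * transpose_mat (sig k l) = 1\<^sub>m d"
  using graph unfolding connection_graph_def by blast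

lemma sig_transpose_mult_sig: "k < n \<Longrightarrow> l < n \<Longrightarrow> 0 < w k l \<Longrightarrow> transpose_mat (sig k l) * sig k l = 1\<^sub>m d"
  by (rule mat_mult_left_right_inverse) (simp_all add: sig_carrier sig_orthogonal)

lemma connected: "k < n \<Longrightarrow> l < n \<Longrightarrow> (k, l) \<in> {(a, b). a < n \<and> b < n \<and> 0 < w a b}\<^sup>*"
  using graph unfolding connection_graph_def by blast

lemma vdeg_nonneg: "k < n \<Longrightarrow> 0 \<le> vdeg n w k"
  unfolding vdeg_def by (auto intro!: sum_nonneg weight_nonneg)

lemma vdeg_pos:
  assumes "k < n" and "1 < n"
  shows "0 < vdeg n w k"
proof -
  define l :: nat where "l = (if k = 0 then 1 else 0)"
  have "l < n" "l \<noteq> k"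
    using assms by (auto simp: l_def)
  with connected[OF \<open>k < n\<close> \<open>l < n\<close>] obtain m where "m < n" "0 < w k m"
    by (auto elim: converse_rtranclE)
  moreover have "w k m \<le> vdeg n w k"
    unfolding vdeg_def using \<open>m < n\<close> \<open>k < n\<close> weight_nonneg by (intro member_le_sum) auto
  ultimately show ?thesis
    by linarith
qed

lemma conn_laplacian_block_entry:
  assumes "k < n" "l < n" "a < d" "e < d"
  shows "conn_laplacian n d w sig $$ (k * d + a, l * d + e) =
    (if k = l \<and> a = e then vdeg n w k else 0) - w k l * sig k l $$ (a, e)"
  using assms block_index_lt[of k n a d] block_index_lt[of l n e d] weight_self weight_nonneg[of k l]
  by (auto simp: conn_laplacian_def Let_def)

lemma walk_prob_nonneg: "x < n \<Longrightarrow> set ys \<subseteq> {..<n} \<Longrightarrow> 0 \<le> walk_prob n w x ys"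
  by (induction ys arbitrary: x) (auto intro!: mult_nonneg_nonneg divide_nonneg_nonneg weight_nonneg vdeg_nonneg)

text \<open>The connection is constrained only on edges of positive weight, hence the hypothesis
  on the walk probability.\<close>
lemma walk_sig_orthogonal:
  "x < n \<Longrightarrow> set ys \<subseteq> {..<n} \<Longrightarrow> walk_prob n w x ys \<noteq> 0 \<Longrightarrow>
    walk_sig d sig x ys \<in> carrier_mat d d \<and>
    walk_sig d sig x ys * transpose_mat (walk_sig d sig x ys) = 1\<^sub>m d"
proof (induction ys arbitrary: x)
  case (Cons y ys)
  then have "y < n" "0 < w x y" "set ys \<subseteq> {..<n}" "walk_prob n w y ys \<noteq> 0"
    using weight_nonneg[of x y] by auto
  with Cons.IH[of y] Cons.prems(1) show ?case
    using orthogonal_mat_mult[of "sig x y" d "walk_sig d sig y ys"] sig_carrier sig_orthogonal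
    by (auto intro: mult_carrier_mat)
qed simp

abbreviation walk_term :: "nat \<Rightarrow> nat \<Rightarrow> nat \<Rightarrow> nat list \<Rightarrow> real" where
  "walk_term x a b \<equiv> \<lambda>ys. walk_prob n w x ys * (walk_sig d sig x ys $$ (a, b))"

lemma walk_term_abs_le:
  assumes "x < n" "set ys \<subseteq> {..<n}" "a < d" "b < d"
  shows "\<bar>walk_term x a b ys\<bar> \<le> walk_prob n w x ys"
proof (cases "walk_prob n w x ys = 0")
  case False
  then have "\<bar>walk_sig d sig x ys $$ (a, b)\<bar> \<le> 1"
    using walk_sig_orthogonal[OF assms(1,2) False] assms(3,4)
    by (intro orthogonal_mat_entry_abs_le_1) auto
  then show ?thesis
    using walk_prob_nonneg[OF assms(1,2)] by (simp add: abs_mult mult_left_le)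
qed simp

lemma walk_term_Cons:
  assumes "x < n" "y < n" "set ys \<subseteq> {..<n}" "a < d" "b < d"
  shows "walk_term x a b (y # ys) =
    w x y / vdeg n w x * (\<Sum>c<d. sig x y $$ (a, c) * walk_term y c b ys)"
proof (cases "w x y = 0 \<or> walk_prob n w y ys = 0")
  case False
  then have "sig x y \<in> carrier_mat d d" "walk_sig d sig y ys \<in> carrier_mat d d"
    using assms weight_nonneg[of x y] sig_carrier walk_sig_orthogonal by auto
  then show ?thesis
    using assms by (simp add: scalar_prod_def atLeast0LessThan sum_distrib_left mult_ac)
qed auto

lemma walk_term_single:
  assumes "x < n" "y < n" "a < d" "b < d"
  shows "walk_term x a b [y] = w x y / vdeg n w x * sig x y $$ (a, b)"
  using assms sig_carrier[of x y] weight_nonneg[of x y] by (cases "w x y = 0") auto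

lemma sum_weight_in_degree: "(\<Sum>k<n. \<Sum>l<n. w k l * f l) = (\<Sum>k<n. vdeg n w k * f k)"
proof -
  have "(\<Sum>k<n. \<Sum>l<n. w k l * f l) = (\<Sum>l<n. \<Sum>k<n. w l k * f l)"
    by (subst sum.swap) (intro sum.cong refl, simp add: weight_sym)
  then show ?thesis
    by (simp add: vdeg_def sum_distrib_right)
qed

lemma edge_energy:
  fixes g h :: "nat \<Rightarrow> real"
  assumes "k < n" "l < n"
  shows "w k l * (\<Sum>a<d. (g a - (\<Sum>e<d. sig k l $$ (a, e) * h e))\<^sup>2) =
    w k l * ((\<Sum>a<d. (g a)\<^sup>2) - 2 * (\<Sum>a<d. g a * (\<Sum>e<d. sig k l $$ (a, e) * h e))
      + (\<Sum>e<d. (h e)\<^sup>2))"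
proof (cases "w k l = 0")
  case False
  then have edge: "0 < w k l"
    using weight_nonneg[OF assms] by simp
  have "(\<Sum>a<d. (\<Sum>e<d. sig k l $$ (a, e) * h e)\<^sup>2) = (\<Sum>e<d. (h e)\<^sup>2)"
    by (rule orthogonal_mat_sum_squares[OF sig_carrier[OF assms edge] sig_transpose_mult_sig[OF assms edge]])
  then show ?thesis
    by (simp add: power2_diff sum.distrib sum_subtractf sum_distrib_left mult_ac)
qed simp

lemma dirichlet_energy:
  fixes u :: "nat \<Rightarrow> nat \<Rightarrow> real"
  shows "(\<Sum>k<n. \<Sum>l<n. w k l * (\<Sum>a<d. (u k a - (\<Sum>e<d. sig k l $$ (a, e) * u l e))\<^sup>2)) =
    2 * (\<Sum>k<n. \<Sum>a<d. u k a * (vdeg n w k * u k a - (\<Sum>l<n. w k l * (\<Sum>e<d. sig k l $$ (a, e) * u l e))))"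
proof -
  define s where "s k l a = (\<Sum>e<d. sig k l $$ (a, e) * u l e)" for k l a
  define N where "N l = (\<Sum>a<d. (u l a)\<^sup>2)" for l
  define X where "X k l = (\<Sum>a<d. u k a * s k l a)" for k l
  have transport: "(\<Sum>a<d. u k a * (\<Sum>l<n. w k l * s k l a)) = (\<Sum>l<n. w k l * X k l)" for k
  proof -
    have "(\<Sum>a<d. u k a * (\<Sum>l<n. w k l * s k l a)) = (\<Sum>a<d. \<Sum>l<n. w k l * (u k a * s k l a))"
      by (simp add: sum_distrib_left mult.left_commute)
    also have "\<dots> = (\<Sum>l<n. \<Sum>a<d. w k l * (u k a * s k l a))"
      by (rule sum.swap)
    finally show ?thesis
      by (simp add: X_def sum_distrib_left)
  qed
  have "(\<Sum>k<n. \<Sum>l<n. w k l * (\<Sum>a<d. (u k a - s k l a)\<^sup>2)) =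
      (\<Sum>k<n. \<Sum>l<n. w k l * N k - 2 * (w k l * X k l) + w k l * N l)"
    unfolding s_def N_def X_def
    by (intro sum.cong refl) (simp only: edge_energy lessThan_iff, simp add: algebra_simps)
  also have "\<dots> = 2 * (\<Sum>k<n. vdeg n w k * N k) - 2 * (\<Sum>k<n. \<Sum>l<n. w k l * X k l)"
    by (simp add: sum.distrib sum_subtractf sum_distrib_left sum_distrib_right vdeg_def
        sum_weight_in_degree[of N])
  also have "\<dots> = 2 * ((\<Sum>k<n. vdeg n w k * N k) - (\<Sum>k<n. \<Sum>a<d. u k a * (\<Sum>l<n. w k l * s k l a)))"
    by (simp add: transport)
  also have "\<dots> = 2 * (\<Sum>k<n. \<Sum>a<d. u k a * (vdeg n w k * u k a - (\<Sum>l<n. w k l * s k l a)))"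
  proof -
    have "(\<Sum>a<d. u k a * (vdeg n w k * u k a - (\<Sum>l<n. w k l * s k l a))) =
        vdeg n w k * N k - (\<Sum>a<d. u k a * (\<Sum>l<n. w k l * s k l a))" for k
      by (simp add: N_def right_diff_distrib sum_subtractf sum_distrib_left power2_eq_square mult.left_commute)
    then show ?thesis
      by (simp add: sum_subtractf)
  qed
  finally show ?thesis
    by (simp only: s_def)
qed

lemma harmonic_eq_0_if_vanishes_at:
  fixes u :: "nat \<Rightarrow> nat \<Rightarrow> real"
  assumes "j < n" and zero: "\<And>e. u j e = 0"
    and harmonic: "\<And>k a. k < n \<Longrightarrow> k \<noteq> j \<Longrightarrow> a < d \<Longrightarrow>
      vdeg n w k * u k a = (\<Sum>l<n. w k l * (\<Sum>e<d. sig k l $$ (a, e) * u l e))"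
    and "k < n" "a < d"
  shows "u k a = 0"
proof -
  define N where "N l = (\<Sum>a<d. (u l a)\<^sup>2)" for l
  define D where "D k l = w k l * (\<Sum>a<d. (u k a - (\<Sum>e<d. sig k l $$ (a, e) * u l e))\<^sup>2)" for k l
  have D_nonneg: "0 \<le> D k l" if "k < n" "l < n" for k l
    unfolding D_def using weight_nonneg[OF that] by (simp add: sum_nonneg)
  have "u k a * (vdeg n w k * u k a - (\<Sum>l<n. w k l * (\<Sum>e<d. sig k l $$ (a, e) * u l e))) = 0"
    if "k < n" "a < d" for k a
    using that by (cases "k = j") (simp_all add: zero harmonic)
  then have "(\<Sum>k<n. \<Sum>l<n. D k l) = 0"
    unfolding D_def dirichlet_energy by (auto intro!: sum.neutral)
  then have row_zero: "(\<Sum>l<n. D k l) = 0" if "k < n" for k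
    using that D_nonneg by (subst (asm) sum_nonneg_eq_0_iff) (auto intro: sum_nonneg)
  have D_zero: "D k l = 0" if "k < n" "l < n" for k l
    using row_zero[OF that(1)] that D_nonneg by (subst (asm) sum_nonneg_eq_0_iff) auto
  have edge: "N k = N l" if "k < n" "l < n" "0 < w k l" for k l
  proof -
    have "(\<Sum>a<d. (u k a - (\<Sum>e<d. sig k l $$ (a, e) * u l e))\<^sup>2) = 0"
      using D_zero[OF that(1,2)] that(3) by (simp add: D_def)
    then have "u k a = (\<Sum>e<d. sig k l $$ (a, e) * u l e)" if "a < d" for a
      using that by (subst (asm) sum_nonneg_eq_0_iff) auto
    then have "N k = (\<Sum>a<d. (\<Sum>e<d. sig k l $$ (a, e) * u l e)\<^sup>2)"
      unfolding N_def by (intro sum.cong) auto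
    also have "\<dots> = N l"
      unfolding N_def by (rule orthogonal_mat_sum_squares[OF sig_carrier[OF that] sig_transpose_mult_sig[OF that]])
    finally show ?thesis .
  qed
  have "N k = N j"
    using connected[OF \<open>k < n\<close> \<open>j < n\<close>]
    by (induction rule: converse_rtrancl_induct) (auto dest: edge)
  then have "N k = 0"
    by (simp add: N_def zero)
  then show ?thesis
    using \<open>a < d\<close> unfolding N_def by (subst (asm) sum_nonneg_eq_0_iff) auto
qed

end

locale conn_graph_target = conn_graph +
  fixes j :: nat
  assumes target_lt: "j < n" and nontrivial: "1 < n"
begin

abbreviation paths :: "nat list set" where
  "paths \<equiv> first_passage_paths n j"

abbreviation Omega :: "nat \<Rightarrow> real mat" where
  "Omega x \<equiv> Omega0 n d w sig x j"

abbreviation Ljc :: "real mat" where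
  "Ljc \<equiv> lap_jc n d j (conn_laplacian n d w sig)"

abbreviation Ljcj :: "real mat" where
  "Ljcj \<equiv> lap_jc_j n d j (conn_laplacian n d w sig)"

lemma paths_subset: "ys \<in> paths \<Longrightarrow> set ys \<subseteq> {..<n}"
  by (simp add: first_passage_paths_def)

lemma transition_prob_sum: "x < n \<Longrightarrow> (\<Sum>y<n. w x y / vdeg n w x) = 1"
  using vdeg_pos[OF _ nontrivial, of x] by (simp add: sum_divide_distrib[symmetric] vdeg_def[symmetric])

lemma sum_walk_prob_length_le: "x < n \<Longrightarrow> sum (walk_prob n w x) {ys \<in> paths. length ys \<le> T} \<le> 1"
proof (induction T arbitrary: x)
  case 0
  have no_paths: "{ys \<in> paths. length ys \<le> 0} = {}"
    by (auto simp: first_passage_paths_def)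
  show ?case
    unfolding no_paths by simp
next
  case (Suc T)
  let ?P = "{ys \<in> paths. length ys \<le> T}"
  let ?p = "\<lambda>y. w x y / vdeg n w x"
  have not_single: "[j] \<notin> (\<Union>y\<in>{..<n} - {j}. (#) y ` ?P)"
    by (auto simp: first_passage_paths_def)
  have union: "sum (walk_prob n w x) (\<Union>y\<in>{..<n} - {j}. (#) y ` ?P) =
      (\<Sum>y\<in>{..<n} - {j}. sum (walk_prob n w x) ((#) y ` ?P))"
    by (rule sum.UNION_disjoint) (auto simp: finite_first_passage_paths_length_le)
  have "sum (walk_prob n w x) {ys \<in> paths. length ys \<le> Suc T} =
      ?p j + (\<Sum>y\<in>{..<n} - {j}. sum (walk_prob n w x) ((#) y ` ?P))"
    unfolding first_passage_paths_length_le_Suc[OF target_lt] union[symmetric]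
    by (subst sum.insert[OF _ not_single]) (simp_all add: finite_first_passage_paths_length_le)
  also have "\<dots> = ?p j + (\<Sum>y\<in>{..<n} - {j}. ?p y * sum (walk_prob n w y) ?P)"
    by (simp add: sum.reindex sum_distrib_left)
  also have "\<dots> \<le> ?p j + (\<Sum>y\<in>{..<n} - {j}. ?p y)"
  proof -
    have "?p y * sum (walk_prob n w y) ?P \<le> ?p y" if "y < n" for y
      using Suc.IH[OF that] weight_nonneg[OF \<open>x < n\<close> that] vdeg_nonneg[OF \<open>x < n\<close>]
      by (intro mult_left_le) auto
    then show ?thesis
      by (intro add_left_mono sum_mono) auto
  qed
  also have "\<dots> = (\<Sum>y<n. ?p y)"
    using sum.remove[of "{..<n}" j ?p] target_lt by simp
  finally show ?case
    using transition_prob_sum[OF \<open>x < n\<close>] by simp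
qed

lemma walk_prob_summable_on:
  assumes "x < n"
  shows "walk_prob n w x summable_on paths"
proof (rule nonneg_bdd_above_summable_on)
  show "0 \<le> walk_prob n w x ys" if "ys \<in> paths" for ys
    using walk_prob_nonneg[OF assms paths_subset[OF that]] .
  show "bdd_above (sum (walk_prob n w x) ` {F. F \<subseteq> paths \<and> finite F})"
  proof (rule bdd_aboveI2)
    fix F assume F: "F \<in> {F. F \<subseteq> paths \<and> finite F}"
    define T where "T = Max (insert 0 (length ` F))"
    have "F \<subseteq> {ys \<in> paths. length ys \<le> T}"
      using F by (auto simp: T_def)
    then have "sum (walk_prob n w x) F \<le> sum (walk_prob n w x) {ys \<in> paths. length ys \<le> T}"
      using assms walk_prob_nonneg paths_subset
      by (intro sum_mono2 finite_first_passage_paths_length_le) auto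
    also have "\<dots> \<le> 1"
      using sum_walk_prob_length_le[OF assms] .
    finally show "sum (walk_prob n w x) F \<le> 1" .
  qed
qed

lemma walk_term_summable_on:
  assumes "x < n" "a < d" "b < d"
  shows "walk_term x a b summable_on paths"
proof -
  have "walk_term x a b abs_summable_on paths"
    using walk_prob_summable_on[OF assms(1)]
    by (rule abs_summable_on_comparison_test') (use walk_term_abs_le assms paths_subset in auto)
  then show ?thesis
    using summable_on_iff_abs_summable_on_real by blast
qed

lemma walk_term_has_sum_Omega:
  assumes "x < n" "a < d" "b < d"
  shows "(walk_term x a b has_sum Omega x $$ (a, b)) paths"
  using walk_term_summable_on[OF assms] assms by (simp add: Omega0_def)

lemma walk_term_has_sum_first_step:
  assumes x: "x < n" and ab: "a < d" "b < d"
  shows "(walk_term x a b has_sum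
      (w x j / vdeg n w x * sig x j $$ (a, b) +
       (\<Sum>y\<in>{..<n} - {j}. w x y / vdeg n w x * (\<Sum>c<d. sig x y $$ (a, c) * Omega y $$ (c, b))))) paths"
proof -
  let ?rest = "\<Union>y\<in>{..<n} - {j}. (#) y ` paths"
  have step: "(walk_term x a b has_sum
      (w x y / vdeg n w x * (\<Sum>c<d. sig x y $$ (a, c) * Omega y $$ (c, b)))) ((#) y ` paths)"
    if y: "y \<in> {..<n} - {j}" for y
  proof -
    have "((\<lambda>ys. w x y / vdeg n w x * (\<Sum>c<d. sig x y $$ (a, c) * walk_term y c b ys)) has_sum
        (w x y / vdeg n w x * (\<Sum>c<d. sig x y $$ (a, c) * Omega y $$ (c, b)))) paths"
      using y ab by (intro has_sum_cmult_right has_sum_sum walk_term_has_sum_Omega) auto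
    then have "((walk_term x a b \<circ> (#) y) has_sum
        (w x y / vdeg n w x * (\<Sum>c<d. sig x y $$ (a, c) * Omega y $$ (c, b)))) paths"
      using walk_term_Cons[OF x _ _ ab] y paths_subset by (subst has_sum_cong) auto
    then show ?thesis
      by (subst has_sum_reindex) auto
  qed
  have "[j] \<notin> ?rest"
    by (auto simp: first_passage_paths_def)
  from has_sum_insert[OF this sum_has_sum[OF _ step]]
  show ?thesis
    unfolding first_passage_paths_unfold[OF target_lt, symmetric] walk_term_single[OF x target_lt ab]
    by auto
qed

lemma Omega_first_step:
  assumes "x < n" "a < d" "b < d"
  shows "vdeg n w x * Omega x $$ (a, b)
      - (\<Sum>y\<in>{..<n} - {j}. w x y * (\<Sum>c<d. sig x y $$ (a, c) * Omega y $$ (c, b)))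
    = w x j * sig x j $$ (a, b)"
proof -
  have "Omega x $$ (a, b) = w x j / vdeg n w x * sig x j $$ (a, b) +
      (\<Sum>y\<in>{..<n} - {j}. w x y / vdeg n w x * (\<Sum>c<d. sig x y $$ (a, c) * Omega y $$ (c, b)))"
    using walk_term_has_sum_Omega[OF assms] walk_term_has_sum_first_step[OF assms]
    by (rule has_sum_unique)
  then have "vdeg n w x * Omega x $$ (a, b) = w x j * sig x j $$ (a, b) +
      (\<Sum>y\<in>{..<n} - {j}. w x y * (\<Sum>c<d. sig x y $$ (a, c) * Omega y $$ (c, b)))"
    using vdeg_pos[OF assms(1) nontrivial] by (simp add: distrib_left sum_distrib_left)
  then show ?thesis
    by simp
qed

definition Omega_stack :: "real mat" where
  "Omega_stack = mat ((n - 1) * d) d (\<lambda>(r, b). Omega (skip j (r div d)) $$ (r mod d, b))"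

lemma Omega_stack_carrier: "Omega_stack \<in> carrier_mat ((n - 1) * d) d"
  by (simp add: Omega_stack_def)

lemma Omega_stack_index:
  assumes "l < n" "l \<noteq> j" "e < d" "b < d"
  shows "Omega_stack $$ (pos j l * d + e, b) = Omega l $$ (e, b)"
  using assms block_index_lt[OF pos_lt[OF target_lt]] by (simp add: Omega_stack_def)

lemma lap_jc_row:
  assumes k: "k < n" "k \<noteq> j" and a: "a < d"
    and fg: "\<And>l e. l < n \<Longrightarrow> l \<noteq> j \<Longrightarrow> e < d \<Longrightarrow> f (pos j l * d + e) = g l e"
  shows "(\<Sum>c\<in>{0..<(n - 1) * d}. Ljc $$ (pos j k * d + a, c) * f c) =
    vdeg n w k * g k a - (\<Sum>l\<in>{..<n} - {j}. w k l * (\<Sum>e<d. sig k l $$ (a, e) * g l e))"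
proof -
  let ?r = "pos j k * d + a"
  have "(\<Sum>c\<in>{0..<(n - 1) * d}. Ljc $$ (?r, c) * f c) =
      (\<Sum>p<n - 1. \<Sum>e<d. Ljc $$ (?r, p * d + e) * f (p * d + e))"
    by (simp add: atLeast0LessThan sum_blocks)
  also have "\<dots> = (\<Sum>l\<in>{..<n} - {j}. \<Sum>e<d. Ljc $$ (?r, pos j l * d + e) * f (pos j l * d + e))"
    using sum_skip[OF target_lt, of "\<lambda>l. \<Sum>e<d. Ljc $$ (?r, pos j l * d + e) * f (pos j l * d + e)"]
    by simp
  also have "\<dots> = (\<Sum>l\<in>{..<n} - {j}. \<Sum>e<d.
      (if k = l \<and> a = e then vdeg n w k * g l e else 0) - w k l * (sig k l $$ (a, e) * g l e))"
    using k a fg by (intro sum.cong refl)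
      (simp add: lap_jc_index[OF target_lt] conn_laplacian_block_entry left_diff_distrib)
  also have "\<dots> = (\<Sum>l\<in>{..<n} - {j}. \<Sum>e<d. if k = l \<and> a = e then vdeg n w k * g l e else 0)
      - (\<Sum>l\<in>{..<n} - {j}. w k l * (\<Sum>e<d. sig k l $$ (a, e) * g l e))"
    by (simp add: sum_subtractf sum_distrib_left)
  also have "(\<Sum>l\<in>{..<n} - {j}. \<Sum>e<d. if k = l \<and> a = e then vdeg n w k * g l e else 0) =
      (\<Sum>l\<in>{..<n} - {j}. if k = l then vdeg n w k * g l a else 0)"
    using a by (intro sum.cong refl) (auto simp: sum.delta)
  also have "\<dots> = vdeg n w k * g k a"
    using k by (simp add: sum.delta)
  finally show ?thesis .
qed

lemma lap_jc_j_entry: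
  assumes "k < n" "k \<noteq> j" "a < d" "b < d"
  shows "Ljcj $$ (pos j k * d + a, b) = - (w k j * sig k j $$ (a, b))"
  using assms by (simp add: lap_jc_j_index[OF target_lt] conn_laplacian_block_entry[OF _ target_lt])

lemma lap_jc_mult_Omega_stack: "Ljc * Omega_stack = - Ljcj"
proof (rule eq_matI)
  fix r b assume "r < dim_row (- Ljcj)" "b < dim_col (- Ljcj)"
  then have r: "r < (n - 1) * d" and b: "b < d"
    by simp_all
  obtain k a where k: "k < n" "k \<noteq> j" and a: "a < d" and r_eq: "r = pos j k * d + a"
    by (rule node_index_cases[OF r target_lt])
  have "(Ljc * Omega_stack) $$ (r, b) = (\<Sum>c\<in>{0..<(n - 1) * d}. Ljc $$ (r, c) * Omega_stack $$ (c, b))"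
    using r b by (simp add: lap_jc_def Omega_stack_def scalar_prod_def)
  also have "\<dots> = vdeg n w k * Omega k $$ (a, b)
      - (\<Sum>l\<in>{..<n} - {j}. w k l * (\<Sum>e<d. sig k l $$ (a, e) * Omega l $$ (e, b)))"
    unfolding r_eq using k a b by (intro lap_jc_row) (simp_all add: Omega_stack_index)
  also have "\<dots> = w k j * sig k j $$ (a, b)"
    by (rule Omega_first_step[OF k(1) a b])
  also have "\<dots> = (- Ljcj) $$ (r, b)"
    using r b k a by (simp add: r_eq lap_jc_j_entry)
  finally show "(Ljc * Omega_stack) $$ (r, b) = (- Ljcj) $$ (r, b)" .
qed (simp_all add: lap_jc_def Omega_stack_def)

lemma lap_jc_kernel:
  assumes v: "v \<in> carrier_vec ((n - 1) * d)" and Lv: "Ljc *\<^sub>v v = 0\<^sub>v ((n - 1) * d)"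
  shows "v = 0\<^sub>v ((n - 1) * d)"
proof -
  define u where "u l e = (if l = j then 0 else v $ (pos j l * d + e))" for l e
  have harmonic: "vdeg n w k * u k a = (\<Sum>l<n. w k l * (\<Sum>e<d. sig k l $$ (a, e) * u l e))"
    if k: "k < n" "k \<noteq> j" and a: "a < d" for k a
  proof -
    have r: "pos j k * d + a < (n - 1) * d"
      using block_index_lt[OF pos_lt[OF target_lt k] a] .
    have "0 = (Ljc *\<^sub>v v) $ (pos j k * d + a)"
      using Lv r by simp
    also have "\<dots> = (\<Sum>c\<in>{0..<(n - 1) * d}. Ljc $$ (pos j k * d + a, c) * v $ c)"
      using r v by (simp add: lap_jc_def scalar_prod_def)
    also have "\<dots> = vdeg n w k * u k a - (\<Sum>l\<in>{..<n} - {j}. w k l * (\<Sum>e<d. sig k l $$ (a, e) * u l e))"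
      using k a by (intro lap_jc_row) (simp_all add: u_def)
    also have "(\<Sum>l\<in>{..<n} - {j}. w k l * (\<Sum>e<d. sig k l $$ (a, e) * u l e)) =
        (\<Sum>l<n. w k l * (\<Sum>e<d. sig k l $$ (a, e) * u l e))"
      using sum.remove[of "{..<n}" j "\<lambda>l. w k l * (\<Sum>e<d. sig k l $$ (a, e) * u l e)"] target_lt
      by (simp add: u_def)
    finally show ?thesis
      by simp
  qed
  show ?thesis
  proof (rule eq_vecI)
    fix r assume "r < dim_vec (0\<^sub>v ((n - 1) * d))"
    then have r: "r < (n - 1) * d"
      by simp
    obtain k a where k: "k < n" "k \<noteq> j" "a < d" and r_eq: "r = pos j k * d + a"
      by (rule node_index_cases[OF r target_lt])
    have "u k a = 0"
      by (rule harmonic_eq_0_if_vanishes_at[OF target_lt _ harmonic k(1) k(3)]) (simp add: u_def)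
    then show "v $ r = 0\<^sub>v ((n - 1) * d) $ r"
      using r k by (simp add: r_eq u_def)
  qed (use v in simp)
qed

lemma lap_jc_invertible: "invertible_mat Ljc"
  using lap_jc_carrier lap_jc_kernel by (rule invertible_mat_if_trivial_kernel)

lemma Omega_eq_neg_node_block:
  assumes i: "i < n" "i \<noteq> j"
    and X: "X \<in> carrier_mat ((n - 1) * d) ((n - 1) * d)" "X * Ljc = 1\<^sub>m ((n - 1) * d)"
  shows "Omega i = - node_block d j i (X * Ljcj)"
proof -
  have "Omega_stack = (X * Ljc) * Omega_stack"
    using X(2) Omega_stack_carrier by simp
  also have "\<dots> = X * (Ljc * Omega_stack)"
    by (rule assoc_mult_mat[OF X(1) lap_jc_carrier Omega_stack_carrier])
  finally have stack: "Omega_stack = - (X * Ljcj)"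
    using X(1) by (simp add: lap_jc_mult_Omega_stack)
  show ?thesis
  proof (rule eq_matI)
    fix a b assume "a < dim_row (- node_block d j i (X * Ljcj))" "b < dim_col (- node_block d j i (X * Ljcj))"
    then have a: "a < d" and b: "b < d"
      by (simp_all add: node_block_def)
    have "(- node_block d j i (X * Ljcj)) $$ (a, b) = Omega_stack $$ (pos j i * d + a, b)"
      using X(1) a b block_index_lt[OF pos_lt[OF target_lt i] a]
      by (simp add: node_block_def stack)
    also have "\<dots> = Omega i $$ (a, b)"
      by (rule Omega_stack_index[OF i a b])
    finally show "Omega i $$ (a, b) = (- node_block d j i (X * Ljcj)) $$ (a, b)"
      by simp
  qed (simp_all add: Omega0_def node_block_def)
qed

end

theorem proposition4p9:
  fixes n d :: nat and w :: "nat \<Rightarrow> nat \<Rightarrow> real" and sig :: "nat \<Rightarrow> nat \<Rightarrow> real mat"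
    and i j :: nat
  assumes "connection_graph n d w sig"
    and "i < n" and "j < n" and "i \<noteq> j"
  shows "(\<forall>a<d. \<forall>b<d. (\<lambda>ys. walk_prob n w i ys * (walk_sig d sig i ys $$ (a, b)))
             summable_on first_passage_paths n j)
    \<and> invertible_mat (lap_jc n d j (conn_laplacian n d w sig))
    \<and> (\<forall>X. X \<in> carrier_mat ((n - 1) * d) ((n - 1) * d)
           \<and> inverts_mat (lap_jc n d j (conn_laplacian n d w sig)) X
           \<and> inverts_mat X (lap_jc n d j (conn_laplacian n d w sig)) \<longrightarrow>
         Omega0 n d w sig i j
           = - node_block d j i (X * lap_jc_j n d j (conn_laplacian n d w sig)))"
proof -
  interpret conn_graph_target n d w sig j
    using assms by unfold_locales auto
  show ?thesis
    using walk_term_summable_on[OF \<open>i < n\<close>] lap_jc_invertible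
      Omega_eq_neg_node_block[OF \<open>i < n\<close> \<open>i \<noteq> j\<close>]
    by (auto simp: inverts_mat_def)
qed

end
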